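(* $\mathcal{F}_0\subseteq\mathcal{F}$.
   Context: Let $G=(V,E)$ be a finite undirected graph with $V=Q\cup R\cup B$ (pairwise disjoint), where $Q$ is the set of sources, $R$ the set of potential relay locations and $B$ the set of potential sink locations; let $h_{\max}$ be a positive integer and $c_s,c_r\ge0$. Form the augmented graph $\tilde G=(\tilde V,\tilde E)$ with $\tilde V=V\cup\{0\}$, where $0$ is a new vertex (virtual sink), and $\tilde E=E\cup\{\{0,b\}:b\in B\}$. Let $\tilde R=R\cup B$ with node costs $c_j=c_r$ for $j\in R$ and $c_j=c_s$ for $j\in B$. For a source $k\in Q$, a node cut for $k$ is a set $\gamma\subseteq\tilde V\setminus\{k,0\}$ whose deletion disconnects $k$ from $0$ in $\tilde G$; it is minimal if no proper subset is a node cut; $\Gamma^k$ denotes the set of minimal node cuts for $k$. A vector $\underline y=((y_{j,k})_{k\in Q,\,j\in\tilde V\setminus\{k,0\}},(y_j)_{j\in\tilde R})$ belongs to $\mathcal F$ iff: (i) $\sum_{j\in\gamma}y_{j,k}\ge1$ for all $\gamma\in\Gamma^k$, $k\in Q$; (ii) $y_j\ge y_{j,k}$ for all $j\in\tilde R$, $k\in Q$; (iii) $\sum_{j\in\tilde V\setminus\{k,0\}}y_{j,k}\le h_{\max}$ for all $k\in Q$; (iv) all $y_{j,k},y_j\in\{0,1\}$. For $k\in Q$ let $\mathcal P'_k$ be the set of paths in $\tilde G$ from $k$ to $0$ with at most $h_{\max}+1$ edges, and let $\mathcal U_0$ be the set of tuples $\underline g=(p_k)_{k\in Q}$ with $p_k\in\mathcal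 P'_k$. For $\underline g\in\mathcal U_0$ define $\underline x(\underline g)$ by $x_{j,k}=1$ if $j$ is a vertex of $p_k$ and $0$ otherwise ($k\in Q$, $j\in\tilde V\setminus\{k,0\}$), and $x_j=1$ if $x_{j,k}=1$ for some $k\in Q$ and $0$ otherwise ($j\in\tilde R$). Let $\mathcal F_0=\{\underline x(\underline g):\underline g\in\mathcal U_0\}$. *)

theory Defs
  imports Complex_Main
begin

text \<open>The augmented graph: original vertex v is represented by Some v,
  the virtual sink 0 by None.\<close>

definition aug_verts :: "'a set \<Rightarrow> 'a option set" where
  "aug_verts V = insert None (Some ` V)"

definition aug_edges :: "'a set set \<Rightarrow> 'a set \<Rightarrow> 'a option set set" where
  "aug_edges E B = (\<lambda>e. Some ` e) ` E \<union> (\<lambda>b. {None, Some b}) ` B"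

definition is_path :: "'v set \<Rightarrow> 'v set set \<Rightarrow> 'v list \<Rightarrow> 'v \<Rightarrow> 'v \<Rightarrow> bool" where
  "is_path Vt Et ps s t \<longleftrightarrow>
     ps \<noteq> [] \<and> hd ps = s \<and> last ps = t \<and> distinct ps \<and> set ps \<subseteq> Vt \<and>
     (\<forall>i < length ps - 1. {ps ! i, ps ! Suc i} \<in> Et)"

text \<open>Node cut for source k: a set of vertices of the augmented graph other than
  k and 0 (hence a subset of V - {k}) whose deletion disconnects k from 0.\<close>

definition node_cut :: "'a set \<Rightarrow> 'a set set \<Rightarrow> 'a set \<Rightarrow> 'a \<Rightarrow> 'a set \<Rightarrow> bool" where
  "node_cut V E B k \<gamma> \<longleftrightarrow> \<gamma> \<subseteq> V - {k} \<and>
     \<not> (\<exists>ps. is_path (aug_verts V - Some ` \<gamma>) (aug_edges E B) ps (Some k) None)"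

definition min_node_cut :: "'a set \<Rightarrow> 'a set set \<Rightarrow> 'a set \<Rightarrow> 'a \<Rightarrow> 'a set \<Rightarrow> bool" where
  "min_node_cut V E B k \<gamma> \<longleftrightarrow> node_cut V E B k \<gamma> \<and> (\<forall>\<gamma>'. \<gamma>' \<subset> \<gamma> \<longrightarrow> \<not> node_cut V E B k \<gamma>')"

text \<open>Vectors y = ((y_{j,k}), (y_j)) are pairs of functions (yjk j k, yj j);
  only the values on the index set matter.  Membership in the set F:\<close>

definition setF :: "'a set \<Rightarrow> 'a set \<Rightarrow> 'a set \<Rightarrow> 'a set set \<Rightarrow> nat
    \<Rightarrow> (('a \<Rightarrow> 'a \<Rightarrow> int) \<times> ('a \<Rightarrow> int)) set" where
  "setF Q R B E hmax = {(yjk, yj).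
     (\<forall>k\<in>Q. \<forall>\<gamma>. min_node_cut (Q \<union> R \<union> B) E B k \<gamma> \<longrightarrow> (\<Sum>j\<in>\<gamma>. yjk j k) \<ge> 1) \<and>
     (\<forall>j\<in>R \<union> B. \<forall>k\<in>Q. yj j \<ge> yjk j k) \<and>
     (\<forall>k\<in>Q. (\<Sum>j\<in>(Q \<union> R \<union> B) - {k}. yjk j k) \<le> int hmax) \<and>
     (\<forall>k\<in>Q. \<forall>j\<in>(Q \<union> R \<union> B) - {k}. yjk j k \<in> {0, 1}) \<and>
     (\<forall>j\<in>R \<union> B. yj j \<in> {0, 1})}"

definition paths' :: "'a set \<Rightarrow> 'a set set \<Rightarrow> 'a set \<Rightarrow> nat \<Rightarrow> 'a \<Rightarrow> 'a option list set" where
  "paths' V E B hmax k = {ps. is_path (aug_verts V) (aug_edges E B) ps (Some k) None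
       \<and> length ps - 1 \<le> hmax + 1}"

text \<open>U_0: tuples (p_k)_{k in Q}, represented as functions p with p k in P'_k for k in Q.\<close>

definition setU0 :: "'a set \<Rightarrow> 'a set \<Rightarrow> 'a set \<Rightarrow> 'a set set \<Rightarrow> nat \<Rightarrow> ('a \<Rightarrow> 'a option list) set" where
  "setU0 Q R B E hmax = {p. \<forall>k\<in>Q. p k \<in> paths' (Q \<union> R \<union> B) E B hmax k}"

definition x_of :: "'a set \<Rightarrow> ('a \<Rightarrow> 'a option list) \<Rightarrow> ('a \<Rightarrow> 'a \<Rightarrow> int) \<times> ('a \<Rightarrow> int)" where
  "x_of Q p = ((\<lambda>j k. if Some j \<in> set (p k) then 1 else 0),
               (\<lambda>j. if \<exists>k\<in>Q. j \<noteq> k \<and> Some j \<in> set (p k) then 1 else 0))"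

definition setF0 :: "'a set \<Rightarrow> 'a set \<Rightarrow> 'a set \<Rightarrow> 'a set set \<Rightarrow> nat
    \<Rightarrow> (('a \<Rightarrow> 'a \<Rightarrow> int) \<times> ('a \<Rightarrow> int)) set" where
  "setF0 Q R B E hmax = x_of Q ` setU0 Q R B E hmax"

end

theory Submission
  imports Defs
begin

text \<open>Each path p_k of a routing meets every node cut for k, since otherwise it would survive
  the deletion of the cut; and being simple with at most h_max + 1 edges, it has at most h_max
  vertices besides k and the virtual sink.  The coupling constraint y_j \<ge> y_{j,k} holds because
  sink and relay locations are not sources, and integrality holds by construction.\<close>

lemma sum_indicator_eq_card:
  assumes "finite A"
  shows "(\<Sum>j\<in>A. if P j then 1 else 0 :: 'b :: semiring_1) = of_nat (card {j\<in>A. P j})"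
  using assms by (simp add: sum.If_cases Int_def conj_commute)

lemma is_path_avoiding:
  assumes "is_path Vt Et ps s t" and "set ps \<inter> S = {}"
  shows "is_path (Vt - S) Et ps s t"
  using assms unfolding is_path_def by auto

lemma path_meets_node_cut:
  assumes "is_path (aug_verts V) (aug_edges E B) ps (Some k) None"
    and "node_cut V E B k \<gamma>"
  obtains j where "j \<in> \<gamma>" and "Some j \<in> set ps"
proof -
  have "\<not> is_path (aug_verts V - Some ` \<gamma>) (aug_edges E B) ps (Some k) None"
    using assms(2) unfolding node_cut_def by blast
  then have "set ps \<inter> Some ` \<gamma> \<noteq> {}"
    using is_path_avoiding[OF assms(1)] by blast
  then show thesis using that by blast
qed

lemma card_inner_vertices_le:
  assumes "distinct ps" and "Some k \<in> set ps" and "None \<in> set ps"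
  shows "card {j \<in> A - {k}. Some j \<in> set ps} \<le> length ps - 2"
proof -
  have "card {j \<in> A - {k}. Some j \<in> set ps} = card (Some ` {j \<in> A - {k}. Some j \<in> set ps})"
    by (simp add: card_image)
  also have "\<dots> \<le> card (set ps - {Some k, None})"
    by (rule card_mono) auto
  also have "\<dots> = length ps - 2"
    using assms by (simp add: card_Diff_subset distinct_card)
  finally show ?thesis .
qed

lemma path_covers_min_node_cut:
  assumes "finite V"
    and "is_path (aug_verts V) (aug_edges E B) ps (Some k) None"
    and "min_node_cut V E B k \<gamma>"
  shows "(\<Sum>j\<in>\<gamma>. if Some j \<in> set ps then 1 else 0 :: int) \<ge> 1"
proof -
  have cut: "node_cut V E B k \<gamma>"
    using assms(3) unfolding min_node_cut_def by blast
  then have "finite \<gamma>"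
    using assms(1) finite_subset unfolding node_cut_def by blast
  moreover obtain j where "j \<in> \<gamma>" "Some j \<in> set ps"
    using path_meets_node_cut[OF assms(2) cut] .
  ultimately have "card {j\<in>\<gamma>. Some j \<in> set ps} \<ge> 1"
    by (auto simp: Suc_le_eq card_gt_0_iff)
  then show ?thesis
    using \<open>finite \<gamma>\<close> by (simp add: sum_indicator_eq_card)
qed

lemma path_hop_bound:
  assumes "finite V" and "ps \<in> paths' V E B hmax k"
  shows "(\<Sum>j\<in>V - {k}. if Some j \<in> set ps then 1 else 0 :: int) \<le> int hmax"
proof -
  have "distinct ps" "Some k \<in> set ps" "None \<in> set ps" "length ps - 1 \<le> hmax + 1"
    using assms(2) unfolding paths'_def is_path_def by (auto dest: hd_in_set last_in_set)
  then have "card {j \<in> V - {k}. Some j \<in> set ps} \<le> hmax"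
    using card_inner_vertices_le[of ps k V] by linarith
  then show ?thesis
    using assms(1) by (simp add: sum_indicator_eq_card)
qed

theorem lemma2:
  fixes Q R B :: "'a set" and E :: "'a set set" and hmax :: nat and c_s c_r :: real
  assumes "finite (Q \<union> R \<union> B)"
    and "Q \<inter> R = {}" and "Q \<inter> B = {}" and "R \<inter> B = {}"
    and "\<forall>e\<in>E. \<exists>u v. u \<in> Q \<union> R \<union> B \<and> v \<in> Q \<union> R \<union> B \<and> u \<noteq> v \<and> e = {u, v}"
    and "hmax > 0" and "c_s \<ge> 0" and "c_r \<ge> 0"
  shows "setF0 Q R B E hmax \<subseteq> setF Q R B E hmax"
proof
  fix y assume "y \<in> setF0 Q R B E hmax"
  then obtain p where p: "p \<in> setU0 Q R B E hmax" and y: "y = x_of Q p"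
    unfolding setF0_def by auto
  have path: "p k \<in> paths' (Q \<union> R \<union> B) E B hmax k" if "k \<in> Q" for k
    using p that unfolding setU0_def by auto
  have "(\<Sum>j\<in>\<gamma>. if Some j \<in> set (p k) then 1 else 0 :: int) \<ge> 1"
    if "k \<in> Q" and "min_node_cut (Q \<union> R \<union> B) E B k \<gamma>" for k \<gamma>
    using path_covers_min_node_cut[OF assms(1) _ that(2)] path[OF that(1)]
    unfolding paths'_def by blast
  moreover have "(\<Sum>j\<in>Q \<union> R \<union> B - {k}. if Some j \<in> set (p k) then 1 else 0 :: int) \<le> int hmax"
    if "k \<in> Q" for k
    using path_hop_bound[OF assms(1) path[OF that]] .
  ultimately show "y \<in> setF Q R B E hmax"
    unfolding y x_of_def setF_def using assms(2,3) by auto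
qed

end
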